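(* Let $\theta,\theta_1,\dots,\theta_k\in(0,\pi)$. Then $\sum_{i=1}^k\theta_i<\theta$ if and only if $\sin\big(\theta-\sum_{i\in I}\theta_i\big)>0$ for every subset $I\subseteq\{1,\dots,k\}$ (including $I=\emptyset$). *)

theory Defs
  imports Complex_Main
begin

end

theory Submission
  imports Defs
begin

text \<open>If the angles sum to less than \<open>\<theta>\<close>, every partial difference lies in \<open>(0, \<theta>]\<close>
  and has positive sine. Conversely, add the angles one at a time: once a partial sum
  is below \<open>\<theta>\<close>, adding one more angle (less than \<open>\<pi>\<close>) keeps the difference above
  \<open>-\<pi>\<close>, and on \<open>(-\<pi>, 0]\<close> the sine is nonpositive, so positivity of the sine
  forces the difference to stay positive.\<close>

lemma sin_pos_imp_pos:
  fixes x :: real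
  assumes "- pi < x" and "0 < sin x"
  shows "0 < x"
proof (rule ccontr)
  assume "\<not> 0 < x"
  then have "0 \<le> sin (- x)"
    using assms(1) by (intro sin_ge_zero) auto
  then show False
    using assms(2) by simp
qed

lemma sin_diff_sum_pos:
  fixes f :: "'a \<Rightarrow> real"
  assumes "finite A" and "\<And>i. i \<in> A \<Longrightarrow> 0 \<le> f i"
    and "sum f A < \<theta>" and "\<theta> < pi" and "I \<subseteq> A"
  shows "0 < sin (\<theta> - sum f I)"
proof (rule sin_gt_zero)
  have "sum f I \<le> sum f A"
    using assms by (intro sum_mono2) auto
  then show "0 < \<theta> - sum f I"
    using assms(3) by simp
  have "0 \<le> sum f I"
    using assms(2,5) by (intro sum_nonneg) auto
  then show "\<theta> - sum f I < pi"
    using assms(4) by simp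
qed

lemma sum_less_if_sin_diff_sum_pos:
  fixes f :: "'a \<Rightarrow> real"
  assumes "finite A" and "0 < \<theta>" and "\<And>i. i \<in> A \<Longrightarrow> f i < pi"
    and "\<And>I. I \<subseteq> A \<Longrightarrow> 0 < sin (\<theta> - sum f I)"
  shows "sum f A < \<theta>"
  using assms
proof (induction A rule: finite_induct)
  case empty
  then show ?case by simp
next
  case (insert a A)
  have "sum f A < \<theta>"
    using insert by blast
  moreover have "f a < pi"
    using insert.prems(2) by simp
  ultimately have "- pi < \<theta> - sum f (insert a A)"
    using insert.hyps by simp
  moreover have "0 < sin (\<theta> - sum f (insert a A))"
    using insert.prems(3) by blast
  ultimately have "0 < \<theta> - sum f (insert a A)"
    by (rule sin_pos_imp_pos)
  then show ?case
    by simp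
qed

theorem lemma2p1:
  fixes \<theta> :: real and th :: "nat \<Rightarrow> real" and k :: nat
  assumes "0 < \<theta>" and "\<theta> < pi"
    and "\<And>i. i \<in> {1..k} \<Longrightarrow> 0 < th i \<and> th i < pi"
  shows "(\<Sum>i=1..k. th i) < \<theta> \<longleftrightarrow>
         (\<forall>I. I \<subseteq> {1..k} \<longrightarrow> sin (\<theta> - (\<Sum>i\<in>I. th i)) > 0)"
proof
  assume "(\<Sum>i=1..k. th i) < \<theta>"
  then show "\<forall>I. I \<subseteq> {1..k} \<longrightarrow> sin (\<theta> - (\<Sum>i\<in>I. th i)) > 0"
    using assms(2,3) by (intro allI impI sin_diff_sum_pos) (auto simp: less_imp_le)
next
  assume "\<forall>I. I \<subseteq> {1..k} \<longrightarrow> sin (\<theta> - (\<Sum>i\<in>I. th i)) > 0"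
  then show "(\<Sum>i=1..k. th i) < \<theta>"
    using assms(1,3) by (intro sum_less_if_sin_diff_sum_pos) auto
qed

end
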